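(* Let $m,\delta>1$ be integers, $n=m\delta$, and let $V^1,V^2$ be two copies of $\mathbb{F}_2^n$, each written as $V^i=V^i_1\times\cdots\times V^i_\delta$ with $V^i_j\cong\mathbb{F}_2^m$ (brick $V^i_j$ consisting of coordinates $(j-1)m,\dots,jm-1$). Let $\gamma\in\mathrm{Sym}(\mathbb{F}_2^n)$ be a parallel S-Box, $(x_1,\dots,x_\delta)\gamma=(x_1\gamma_1,\dots,x_\delta\gamma_\delta)$ with $\gamma_j\in\mathrm{Sym}(\mathbb{F}_2^m)$ and $0\gamma_j\neq0$; let $\lambda$ be an invertible linear map of $\mathbb{F}_2^n$ which is non-type-preserving, and put $\rho=\gamma\lambda$. Let $V=V^1\times V^2$. For $k=(k_1,k_2)\in V$ let $\sigma_k:(x_1,x_2)\mapsto(x_1\boxplus k_1,x_2\boxplus k_2)$, where $\boxplus$ is addition modulo $2^n$ on each component, and let $\mathcal{P}:V\to V$, $(x_1,x_2)\mapsto(x_2,\,x_1\oplus x_2\rho)$, where $\oplus$ is bitwise XOR. Let $\Gamma_\infty=\langle \sigma_k\,\mathcal{P}\,\sigma_h : k,h\in V\rangle\le\mathrm{Sym}(V)$. Then $\Gamma_\infty$ is primitive on $V$.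
   Context: A vector $a=(a_0,\dots,a_{n-1})\in\mathbb{F}_2^n$ is identified with the integer $\sum_i a_i2^i$, and $\boxplus$ is addition of these integers modulo $2^n$. Maps act on the right and are composed left to right. Type of a subset: for $D\subseteq\mathbb{F}_2^n$, its type is the sequence of $\delta$ symbols whose $j$-th entry is "white" if the projection of $D$ onto the $j$-th brick has size $1$, "ruled" if it has size $t$ with $1<t<2^m$, and "black" if it is the whole brick. Non-type-preserving: an invertible linear map $\lambda$ of $\mathbb{F}_2^n$ is non-type-preserving if for every subset $D\subseteq\mathbb{F}_2^n$ whose type is (first $a$ entries white, then $b$ ruled, then $c$ black) with $a,c\ge0$, $b\in\{0,1\}$, $a+b+c=\delta$, not all-white and not all-black, the type of $D\lambda$ differs from the type of $D$. A group $G\le\mathrm{Sym}(V)$ is primitive if it is transitive and preserves no partition of $V$ other than $\{V\}$ and the partition into singletons. *)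

theory Defs
  imports Main "HOL-Library.Disjoint_Sets" "HOL-Algebra.Bij" "HOL-Algebra.Generated_Groups"
begin

text \<open>Vectors of F_2^n are represented by natural numbers in {..<2^n}: bit i of a
  is the coordinate a_i. Brick j (0-based, j < delta) consists of the coordinates
  j*m, ..., j*m+m-1; its projection is brick m j a.\<close>

definition brick :: "nat \<Rightarrow> nat \<Rightarrow> nat \<Rightarrow> nat" where
  "brick m j a = (a div 2 ^ (m * j)) mod 2 ^ m"

definition parallel_sbox :: "nat \<Rightarrow> nat \<Rightarrow> (nat \<Rightarrow> nat \<Rightarrow> nat) \<Rightarrow> nat \<Rightarrow> nat" where
  "parallel_sbox m \<delta> gs x = (\<Sum>j<\<delta>. gs j (brick m j x) * 2 ^ (m * j))"

text \<open>Invertible F_2-linear map of F_2^n (additivity w.r.t. XOR is F_2-linearity).\<close>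
definition inv_linear :: "nat \<Rightarrow> (nat \<Rightarrow> nat) \<Rightarrow> bool" where
  "inv_linear n L \<longleftrightarrow> bij_betw L {..<2 ^ n} {..<2 ^ n} \<and>
     (\<forall>x < 2 ^ n. \<forall>y < 2 ^ n. L (xor x y) = xor (L x) (L y))"

datatype brick_colour = White | Ruled | Black

definition brick_type :: "nat \<Rightarrow> nat set \<Rightarrow> nat \<Rightarrow> brick_colour" where
  "brick_type m D j =
     (if card (brick m j ` D) = 1 then White
      else if card (brick m j ` D) = 2 ^ m then Black else Ruled)"

definition std_type :: "nat \<Rightarrow> nat \<Rightarrow> nat \<Rightarrow> brick_colour" where
  "std_type a b j = (if j < a then White else if j < a + b then Ruled else Black)"

definition non_type_preserving :: "nat \<Rightarrow> nat \<Rightarrow> (nat \<Rightarrow> nat) \<Rightarrow> bool" where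
  "non_type_preserving m \<delta> L \<longleftrightarrow>
     (\<forall>D a b c. D \<subseteq> {..<2 ^ (m * \<delta>)} \<and> D \<noteq> {} \<and> b \<le> 1 \<and> a + b + c = \<delta>
        \<and> a \<noteq> \<delta> \<and> c \<noteq> \<delta>
        \<and> (\<forall>j<\<delta>. brick_type m D j = std_type a b j)
      \<longrightarrow> (\<exists>j<\<delta>. brick_type m (L ` D) j \<noteq> brick_type m D j))"

definition sigma :: "nat \<Rightarrow> nat \<times> nat \<Rightarrow> nat \<times> nat \<Rightarrow> nat \<times> nat" where
  "sigma n k x = ((fst x + fst k) mod 2 ^ n, (snd x + snd k) mod 2 ^ n)"

definition feistel :: "(nat \<Rightarrow> nat) \<Rightarrow> nat \<times> nat \<Rightarrow> nat \<times> nat" where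
  "feistel \<rho> x = (snd x, xor (fst x) (\<rho> (snd x)))"

definition Vspace :: "nat \<Rightarrow> (nat \<times> nat) set" where
  "Vspace n = {..<2 ^ n} \<times> {..<2 ^ n}"

text \<open>Gamma_infinity: maps act on the right, so sigma_k P sigma_h means first sigma_k,
  then P, then sigma_h.\<close>
definition Gamma_inf :: "nat \<Rightarrow> (nat \<Rightarrow> nat) \<Rightarrow> (nat \<times> nat \<Rightarrow> nat \<times> nat) set" where
  "Gamma_inf n \<rho> = generate (BijGroup (Vspace n))
     {restrict (sigma n h \<circ> feistel \<rho> \<circ> sigma n k) (Vspace n) | k h. k \<in> Vspace n \<and> h \<in> Vspace n}"

definition primitive_on :: "'a set \<Rightarrow> ('a \<Rightarrow> 'a) set \<Rightarrow> bool" where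
  "primitive_on X G \<longleftrightarrow>
     (\<forall>x\<in>X. \<forall>y\<in>X. \<exists>g\<in>G. g x = y) \<and>
     (\<forall>P. partition_on X P \<and> (\<forall>g\<in>G. \<forall>B\<in>P. g ` B \<in> P)
        \<longrightarrow> P = {X} \<or> P = {{x} | x. x \<in> X})"

end

theory Submission
  imports Defs "HOL-Computational_Algebra.Primes"
begin

text \<open>
  \<open>\<Gamma>\<^sub>\<infinity>\<close> contains the Feistel map and all translations of \<open>V = (\<int>/2\<^sup>n)\<^sup>2\<close>, so it is
  transitive, and a \<open>\<Gamma>\<^sub>\<infinity>\<close>-invariant partition consists of the cosets of the block \<open>U\<close>
  containing \<open>0\<close>, which is a subgroup. If \<open>U \<noteq> 0\<close>, a suitable multiple of a nonzero element
  has order two, and pushing it through the Feistel map shows \<open>(0, 2\<^sup>n\<^sup>-\<^sup>1) \<in> U\<close>. Hence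
  \<open>{b. (0, b) \<in> U} = 2\<^sup>k\<int>/2\<^sup>n\<close> with \<open>k < n\<close>, \<open>U\<close> contains the same subgroup horizontally, and
  pushing vertical translates through the Feistel map shows that \<open>\<rho>\<close> maps residue classes modulo
  \<open>2\<^sup>k\<close> to residue classes. For \<open>0 < k < n\<close> such a class has a type with white bricks, at most
  one ruled brick and black bricks; the parallel S-box preserves types and \<open>\<lambda>\<close> is
  non-type-preserving, so \<open>\<rho> = \<gamma>\<lambda>\<close> cannot do this. Hence \<open>k = 0\<close> and \<open>U = V\<close>.
\<close>

section \<open>Bricks and the parallel S-box\<close>

lemma brick_less: "brick m j x < 2 ^ m"
  by (simp add: brick_def)

lemma bit_brick: "bit (brick m j x) i \<longleftrightarrow> i < m \<and> bit x (m * j + i)"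
  by (simp add: brick_def flip: take_bit_eq_mod drop_bit_eq_div add: bit_take_bit_iff bit_drop_bit_eq)

lemma brick_add_shift: "brick m j (x + y * 2 ^ (m * j)) = (brick m j x + y) mod 2 ^ m"
  by (simp add: brick_def mod_add_right_eq add.commute)

lemma brick_mod_pow:
  assumes "j < d"
  shows "brick m j (x mod 2 ^ (m * d)) = brick m j x"
proof (rule bit_eqI)
  have "m * j + i < m * d" if "i < m" for i
    using that assms mult_le_mono2[of "Suc j" d m] by simp
  then show "bit (brick m j (x mod 2 ^ (m * d))) i \<longleftrightarrow> bit (brick m j x) i" for i
    by (auto simp: bit_brick simp flip: take_bit_eq_mod simp add: bit_take_bit_iff)
qed

lemma sum_digits_less:
  assumes "\<forall>i<d. f i < (2::nat) ^ m"
  shows "(\<Sum>i<d. f i * 2 ^ (m * i)) < 2 ^ (m * d)"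
  using assms
proof (induction d)
  case (Suc d)
  have "(f d + 1) * 2 ^ (m * d) \<le> 2 ^ m * 2 ^ (m * d)"
    using Suc.prems by (intro mult_le_mono1) (simp add: Suc_le_eq)
  then show ?case
    using Suc by (simp add: power_add algebra_simps)
qed simp

lemma brick_sum_digits:
  assumes "\<forall>i<d. f i < (2::nat) ^ m" and "j < d"
  shows "brick m j (\<Sum>i<d. f i * 2 ^ (m * i)) = f j"
  using assms
proof (induction d)
  case (Suc d)
  define s where "s = (\<Sum>i<d. f i * 2 ^ (m * i))"
  have s_less: "s < 2 ^ (m * d)"
    unfolding s_def using Suc.prems by (intro sum_digits_less) simp
  show ?case
  proof (cases "j = d")
    case True
    have "brick m d s = 0"
      using s_less by (simp add: brick_def)
    then show ?thesis
      using True Suc.prems by (simp add: brick_add_shift flip: s_def)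
  next
    case False
    then have "j < d"
      using Suc.prems by simp
    have "(s + f d * 2 ^ (m * d)) mod 2 ^ (m * d) = s"
      using s_less by simp
    then have "brick m j (s + f d * 2 ^ (m * d)) = brick m j s"
      by (metis brick_mod_pow[OF \<open>j < d\<close>])
    then show ?thesis
      using Suc \<open>j < d\<close> by (simp add: s_def)
  qed
qed simp

lemma sum_bricks: "x < 2 ^ (m * d) \<Longrightarrow> (\<Sum>j<d. brick m j x * 2 ^ (m * j)) = x"
proof (induction d arbitrary: x)
  case (Suc d)
  have "(\<Sum>j<d. brick m j x * 2 ^ (m * j)) = (\<Sum>j<d. brick m j (x mod 2 ^ (m * d)) * 2 ^ (m * j))"
    by (simp add: brick_mod_pow)
  also have "\<dots> = x mod 2 ^ (m * d)"
    by (simp add: Suc.IH)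
  finally have low: "(\<Sum>j<d. brick m j x * 2 ^ (m * j)) = x mod 2 ^ (m * d)" .
  have "x div 2 ^ (m * d) < 2 ^ m"
    using Suc.prems by (simp add: less_mult_imp_div_less power_add mult.commute)
  then have high: "brick m d x = x div 2 ^ (m * d)"
    by (simp add: brick_def)
  show ?case
    using low high mod_div_mult_eq[of x "2 ^ (m * d)"] by simp
qed simp

lemma parallel_sbox_less:
  assumes "\<forall>j<\<delta>. \<forall>y<2 ^ m. gs j y < 2 ^ m"
  shows "parallel_sbox m \<delta> gs x < 2 ^ (m * \<delta>)"
  unfolding parallel_sbox_def using assms by (intro sum_digits_less) (simp add: brick_less)

lemma brick_parallel_sbox:
  assumes "\<forall>j<\<delta>. \<forall>y<2 ^ m. gs j y < 2 ^ m" and "j < \<delta>"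
  shows "brick m j (parallel_sbox m \<delta> gs x) = gs j (brick m j x)"
  unfolding parallel_sbox_def using assms by (intro brick_sum_digits) (simp_all add: brick_less)

lemma parallel_sbox_bij:
  assumes gs: "\<forall>j<\<delta>. bij_betw (gs j) {..<2 ^ m} {..<2 ^ m}"
  shows "bij_betw (parallel_sbox m \<delta> gs) {..<2 ^ (m * \<delta>)} {..<2 ^ (m * \<delta>)}"
proof -
  have maps: "\<forall>j<\<delta>. \<forall>y<2 ^ m. gs j y < 2 ^ m"
    using gs by (auto dest: bij_betwE)
  have "inj_on (parallel_sbox m \<delta> gs) {..<2 ^ (m * \<delta>)}"
  proof (rule inj_onI)
    fix x y :: nat
    assume x: "x \<in> {..<2 ^ (m * \<delta>)}" and y: "y \<in> {..<2 ^ (m * \<delta>)}"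
      and eq: "parallel_sbox m \<delta> gs x = parallel_sbox m \<delta> gs y"
    have "brick m j x = brick m j y" if "j < \<delta>" for j
    proof -
      have "gs j (brick m j x) = gs j (brick m j y)"
        using eq brick_parallel_sbox[OF maps that] by metis
      moreover have "inj_on (gs j) {..<2 ^ m}"
        using gs that by (simp add: bij_betw_def)
      ultimately show ?thesis
        by (simp add: inj_on_eq_iff brick_less)
    qed
    then have "(\<Sum>j<\<delta>. brick m j x * 2 ^ (m * j)) = (\<Sum>j<\<delta>. brick m j y * 2 ^ (m * j))"
      by simp
    then show "x = y"
      using x y by (simp add: sum_bricks)
  qed
  moreover have "parallel_sbox m \<delta> gs ` {..<2 ^ (m * \<delta>)} \<subseteq> {..<2 ^ (m * \<delta>)}"
    using parallel_sbox_less[OF maps] by auto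
  ultimately show ?thesis
    by (simp add: bij_betw_def endo_inj_surj)
qed

lemma brick_type_parallel_sbox_image:
  assumes gs: "\<forall>j<\<delta>. bij_betw (gs j) {..<2 ^ m} {..<2 ^ m}" and "j < \<delta>"
  shows "brick_type m (parallel_sbox m \<delta> gs ` D) j = brick_type m D j"
proof -
  have maps: "\<forall>j<\<delta>. \<forall>y<2 ^ m. gs j y < 2 ^ m"
    using gs by (auto dest: bij_betwE)
  have "brick m j ` parallel_sbox m \<delta> gs ` D = gs j ` brick m j ` D"
    by (simp add: image_image brick_parallel_sbox[OF maps \<open>j < \<delta>\<close>])
  moreover have "inj_on (gs j) {..<2 ^ m}"
    using gs \<open>j < \<delta>\<close> by (simp add: bij_betw_def)
  then have "inj_on (gs j) (brick m j ` D)"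
    by (rule inj_on_subset) (auto simp: brick_less)
  ultimately show ?thesis
    by (simp add: brick_type_def card_image)
qed

section \<open>Residue classes modulo powers of two and their types\<close>

definition low_bits_class :: "nat \<Rightarrow> nat \<Rightarrow> nat \<Rightarrow> nat set" where
  "low_bits_class n k c = {x. x < 2 ^ n \<and> x mod 2 ^ k = c}"

lemma bit_brick_cong:
  assumes "x mod 2 ^ k = y mod 2 ^ k" and "m * j + i < k"
  shows "bit (brick m j x) i \<longleftrightarrow> bit (brick m j y) i"
proof -
  have "bit x (m * j + i) \<longleftrightarrow> bit y (m * j + i)"
    using assms by (metis bit_take_bit_iff take_bit_eq_mod)
  then show ?thesis
    by (simp add: bit_brick)
qed

lemma brick_image_low_bits_class_white:
  assumes "m * (j + 1) \<le> k" and "k \<le> n" and "c < 2 ^ k"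
  shows "brick m j ` low_bits_class n k c = {brick m j c}"
proof -
  have "c < 2 ^ n"
    using assms by (meson less_le_trans one_le_numeral power_increasing)
  then have "c \<in> low_bits_class n k c"
    using assms by (simp add: low_bits_class_def)
  moreover have "brick m j x = brick m j c" if "x \<in> low_bits_class n k c" for x
  proof (rule bit_eqI)
    fix i
    show "bit (brick m j x) i \<longleftrightarrow> bit (brick m j c) i"
    proof (cases "i < m")
      case True
      have "x mod 2 ^ k = c mod 2 ^ k"
        using that assms by (simp add: low_bits_class_def)
      moreover have "m * j + i < k"
        using True assms(1) by simp
      ultimately show ?thesis
        by (rule bit_brick_cong)
    qed (simp add: bit_brick)
  qed
  ultimately show ?thesis
    by blast
qed

lemma brick_image_low_bits_class_black:
  assumes "k \<le> m * j" and "j < d" and "c < 2 ^ k"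
  shows "brick m j ` low_bits_class (m * d) k c = {..<2 ^ m}"
proof
  show "brick m j ` low_bits_class (m * d) k c \<subseteq> {..<2 ^ m}"
    by (auto simp: brick_less)
  show "{..<2 ^ m} \<subseteq> brick m j ` low_bits_class (m * d) k c"
  proof
    fix y :: nat
    assume "y \<in> {..<2 ^ m}"
    then have y: "y < 2 ^ m" by simp
    have c: "c < 2 ^ (m * j)"
      using assms by (meson less_le_trans one_le_numeral power_increasing)
    have "c + y * 2 ^ (m * j) < 2 ^ (m * j) + y * 2 ^ (m * j)"
      using c by simp
    also have "\<dots> = (y + 1) * 2 ^ (m * j)"
      by simp
    also have "\<dots> \<le> 2 ^ m * 2 ^ (m * j)"
      using y by (intro mult_le_mono1) simp
    also have "\<dots> \<le> 2 ^ (m * d)"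
      using assms mult_le_mono2[of "Suc j" d m] by (simp flip: power_add)
    finally have less: "c + y * 2 ^ (m * j) < 2 ^ (m * d)" .
    have "(2::nat) ^ k dvd y * 2 ^ (m * j)"
      using assms by (simp add: le_imp_power_dvd)
    then have "(c + y * 2 ^ (m * j)) mod 2 ^ k = c"
      using assms by (auto elim!: dvdE)
    moreover have "brick m j (c + y * 2 ^ (m * j)) = y"
      using c y by (simp add: brick_add_shift brick_def)
    ultimately show "y \<in> brick m j ` low_bits_class (m * d) k c"
      using less by (force simp: low_bits_class_def)
  qed
qed

lemma add_pow_pred_mod_neq:
  assumes "0 < m" and "b < 2 ^ m"
  shows "(b + 2 ^ (m - 1)) mod 2 ^ m \<noteq> (b::nat)"
proof
  assume "(b + 2 ^ (m - 1)) mod 2 ^ m = b"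
  then have "(b + 2 ^ (m - 1)) mod 2 ^ m = b mod 2 ^ m"
    using assms by simp
  then have "(2::nat) ^ m dvd 2 ^ (m - 1)"
    by (simp add: mod_eq_dvd_iff_nat)
  then show False
    using assms by (simp add: dvd_power_iff_le)
qed

lemma card_less_if_constant_parity:
  fixes A :: "nat set"
  assumes "A \<subseteq> {..<2 ^ m}" and "0 < m" and parity: "\<And>y. y \<in> A \<Longrightarrow> odd y \<longleftrightarrow> p"
  shows "card A < 2 ^ m"
proof -
  define y0 :: nat where "y0 = (if p then 0 else 1)"
  have "y0 \<notin> A"
  proof
    assume "y0 \<in> A"
    then have "odd y0 \<longleftrightarrow> p"
      by (rule parity)
    then show False
      by (simp add: y0_def split: if_splits)
  qed
  moreover have "y0 < 2 ^ m"
    using assms(2) one_less_power[of "2::nat" m] by (simp add: y0_def)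
  ultimately have "A \<subset> {..<2 ^ m}"
    using assms(1) by blast
  then show ?thesis
    using psubset_card_mono[of "{..<2 ^ m}" A] by simp
qed

lemma brick_image_low_bits_class_ruled_card_less:
  assumes "m * j < k" and "0 < m"
  shows "card (brick m j ` low_bits_class n k c) < 2 ^ m"
proof (rule card_less_if_constant_parity)
  show "brick m j ` low_bits_class n k c \<subseteq> {..<2 ^ m}"
    by (auto simp: brick_less)
  fix y
  assume "y \<in> brick m j ` low_bits_class n k c"
  then obtain x where "x mod 2 ^ k = c" and y: "y = brick m j x"
    by (auto simp: low_bits_class_def)
  then have "bit (brick m j x) 0 \<longleftrightarrow> bit (brick m j c) 0"
    using assms by (intro bit_brick_cong) auto
  then show "odd y \<longleftrightarrow> bit c (m * j)"
    using assms(2) by (simp add: y bit_brick flip: bit_0)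
qed (use assms in simp)

lemma brick_image_low_bits_class_ruled_card_ne_1:
  assumes "m * j < k" and "k < m * (j + 1)" and "j < d" and "c < 2 ^ k"
  shows "card (brick m j ` low_bits_class (m * d) k c) \<noteq> 1"
proof
  assume "card (brick m j ` low_bits_class (m * d) k c) = 1"
  then obtain z where z: "brick m j ` low_bits_class (m * d) k c = {z}"
    by (rule card_1_singletonE)
  have m: "0 < m" and k: "k \<le> m * j + (m - 1)"
    using assms by (simp_all add: algebra_simps)
  define c' where "c' = c + 2 ^ (m - 1) * 2 ^ (m * j)"
  have "c < 2 ^ (m * j + (m - 1))"
    using assms k by (meson less_le_trans one_le_numeral power_increasing)
  moreover have "(2::nat) ^ (m - 1) * 2 ^ (m * j) = 2 ^ (m * j + (m - 1))"
    by (simp add: power_add)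
  moreover have "(2::nat) ^ (m * j + m) = 2 * 2 ^ (m * j + (m - 1))"
    using m by (simp flip: power_Suc)
  ultimately have "c' < 2 ^ (m * j + m)"
    by (simp add: c'_def)
  also have "\<dots> \<le> 2 ^ (m * d)"
    using assms mult_le_mono2[of "Suc j" d m] by simp
  finally have c'_less: "c' < 2 ^ (m * d)" .
  have "(2::nat) ^ k dvd 2 ^ (m - 1) * 2 ^ (m * j)"
    using k by (simp add: le_imp_power_dvd flip: power_add)
  then have "c' mod 2 ^ k = c"
    using assms by (auto simp: c'_def elim!: dvdE)
  then have "c \<in> low_bits_class (m * d) k c" and "c' \<in> low_bits_class (m * d) k c"
    using c'_less assms by (auto simp: low_bits_class_def c'_def)
  then have "brick m j c' = brick m j c"
    using z imageI[of _ _ "brick m j"] by (metis singletonD)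
  moreover have "brick m j c' = (brick m j c + 2 ^ (m - 1)) mod 2 ^ m"
    by (simp add: c'_def brick_add_shift)
  ultimately show False
    using add_pow_pred_mod_neq[OF m brick_less] by simp
qed

lemma std_type_low_bits:
  assumes "0 < m"
  shows "std_type (k div m) (if m dvd k then 0 else 1) j =
    (if m * (j + 1) \<le> k then White else if k \<le> m * j then Black else Ruled)"
proof -
  consider "m * (j + 1) \<le> k" | "k \<le> m * j" | "m * j < k" "k < m * (j + 1)"
    by linarith
  then show ?thesis
  proof cases
    case 1
    then have "j < k div m"
      using div_le_mono[OF 1, of m] assms by simp
    then show ?thesis
      using 1 by (simp add: std_type_def)
  next
    case 2
    then have "k div m \<le> j"
      using div_le_mono[OF 2, of m] assms by simp
    moreover have "k div m \<noteq> j" if "\<not> m dvd k"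
    proof
      assume "k div m = j"
      moreover have "k mod m \<noteq> 0"
        using that by (simp add: dvd_eq_mod_eq_0)
      ultimately have "m * j < k"
        using mult_div_mod_eq[of m k] by simp
      then show False
        using 2 by simp
    qed
    ultimately show ?thesis
      using 2 assms by (auto simp: std_type_def)
  next
    case 3
    then have "k div m = j"
      by (intro div_nat_eqI) (simp_all add: algebra_simps)
    moreover have "\<not> m dvd k"
    proof
      assume "m dvd k"
      then have "k = m * (k div m)"
        by simp
      then show False
        using 3 \<open>k div m = j\<close> by simp
    qed
    ultimately show ?thesis
      using 3 by (simp add: std_type_def)
  qed
qed

lemma brick_type_low_bits_class:
  assumes "1 < m" and "k \<le> m * d" and "c < 2 ^ k" and "j < d"
  shows "brick_type m (low_bits_class (m * d) k c) j = std_type (k div m) (if m dvd k then 0 else 1) j"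
proof -
  consider "m * (j + 1) \<le> k" | "k \<le> m * j" | "m * j < k" "k < m * (j + 1)"
    by linarith
  then show ?thesis
  proof cases
    case 1
    then show ?thesis
      using assms by (simp add: std_type_low_bits brick_type_def brick_image_low_bits_class_white)
  next
    case 2
    then show ?thesis
      using assms by (simp add: std_type_low_bits brick_type_def brick_image_low_bits_class_black)
  next
    case 3
    moreover have "card (brick m j ` low_bits_class (m * d) k c) < 2 ^ m"
      using 3 assms(1) by (intro brick_image_low_bits_class_ruled_card_less) simp_all
    ultimately show ?thesis
      using assms brick_image_low_bits_class_ruled_card_ne_1[OF 3 assms(4,3)]
      by (simp add: std_type_low_bits brick_type_def)
  qed
qed

lemma card_low_bits_class:
  assumes "k \<le> n" and "c < 2 ^ k"
  shows "card (low_bits_class n k c) = 2 ^ (n - k)"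
proof -
  have "bij_betw (\<lambda>t. c + t * 2 ^ k) {..<2 ^ (n - k)} (low_bits_class n k c)"
  proof (rule bij_betw_byWitness[where f' = "\<lambda>x. x div 2 ^ k"])
    have n: "(2::nat) ^ n = 2 ^ (n - k) * 2 ^ k"
      using assms(1) by (simp flip: power_add)
    show "(\<lambda>t. c + t * 2 ^ k) ` {..<2 ^ (n - k)} \<subseteq> low_bits_class n k c"
    proof
      fix x
      assume "x \<in> (\<lambda>t. c + t * 2 ^ k) ` {..<2 ^ (n - k)}"
      then obtain t where t: "t < 2 ^ (n - k)" and x: "x = c + t * 2 ^ k"
        by blast
      have "x < (t + 1) * 2 ^ k"
        using x assms(2) by simp
      also have "\<dots> \<le> 2 ^ n"
        using t n by (simp only:) (intro mult_le_mono1, simp)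
      finally show "x \<in> low_bits_class n k c"
        using x assms(2) by (simp add: low_bits_class_def)
    qed
    show "(\<lambda>x. x div 2 ^ k) ` low_bits_class n k c \<subseteq> {..<2 ^ (n - k)}"
      using n by (auto simp: low_bits_class_def less_mult_imp_div_less)
  qed (use assms in \<open>auto simp: low_bits_class_def mod_div_mult_eq\<close>)
  then show ?thesis
    by (metis bij_betw_same_card card_lessThan)
qed

definition preserves_congruence :: "nat \<Rightarrow> nat \<Rightarrow> (nat \<Rightarrow> nat) \<Rightarrow> bool" where
  "preserves_congruence N q f \<longleftrightarrow> (\<forall>x<N. \<forall>y<N. x mod q = y mod q \<longrightarrow> f x mod q = f y mod q)"

lemma image_low_bits_class:
  assumes f: "bij_betw f {..<2 ^ n} {..<2 ^ n}" and pres: "preserves_congruence (2 ^ n) (2 ^ k) f"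
    and "k \<le> n" and "c < 2 ^ k"
  shows "f ` low_bits_class n k c = low_bits_class n k (f c mod 2 ^ k)"
proof (rule card_subset_eq)
  have c: "c < 2 ^ n"
    using assms by (meson less_le_trans one_le_numeral power_increasing)
  show "f ` low_bits_class n k c \<subseteq> low_bits_class n k (f c mod 2 ^ k)"
  proof
    fix y
    assume "y \<in> f ` low_bits_class n k c"
    then obtain x where x: "x < 2 ^ n" "x mod 2 ^ k = c mod 2 ^ k" and y: "y = f x"
      using \<open>c < 2 ^ k\<close> by (auto simp: low_bits_class_def)
    have "f x < 2 ^ n"
      using f x(1) by (auto dest: bij_betwE)
    moreover have "f x mod 2 ^ k = f c mod 2 ^ k"
      using pres x c unfolding preserves_congruence_def by blast
    ultimately show "y \<in> low_bits_class n k (f c mod 2 ^ k)"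
      by (simp add: y low_bits_class_def)
  qed
  have "inj_on f (low_bits_class n k c)"
    using f by (rule bij_betw_imp_inj_on[THEN inj_on_subset]) (auto simp: low_bits_class_def)
  then show "card (f ` low_bits_class n k c) = card (low_bits_class n k (f c mod 2 ^ k))"
    using assms by (simp add: card_image card_low_bits_class)
  show "finite (low_bits_class n k (f c mod 2 ^ k))"
    by (simp add: low_bits_class_def)
qed

lemma non_type_preserving_low_bits_type:
  assumes "non_type_preserving m \<delta> L" and "0 < k" and "k < m * \<delta>"
    and "D \<subseteq> {..<2 ^ (m * \<delta>)}" and "D \<noteq> {}"
    and D: "\<And>j. j < \<delta> \<Longrightarrow> brick_type m D j = std_type (k div m) (if m dvd k then 0 else 1) j"
  shows "\<exists>j<\<delta>. brick_type m (L ` D) j \<noteq> std_type (k div m) (if m dvd k then 0 else 1) j"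
proof -
  define a where "a = k div m"
  define b :: nat where "b = (if m dvd k then 0 else 1)"
  have "a < \<delta>"
    using assms by (simp add: a_def less_mult_imp_div_less mult.commute)
  moreover have "a + b \<noteq> 0"
    using \<open>0 < k\<close> by (auto simp: a_def b_def split: if_splits)
  ultimately have "b \<le> 1 \<and> a + b + (\<delta> - a - b) = \<delta> \<and> a \<noteq> \<delta> \<and> \<delta> - a - b \<noteq> \<delta>"
    by (auto simp: b_def)
  moreover have "\<forall>j<\<delta>. brick_type m D j = std_type a b j"
    using D by (simp add: a_def b_def)
  moreover have "D \<subseteq> {..<2 ^ (m * \<delta>)} \<and> D \<noteq> {} \<and> b \<le> 1 \<and> a + b + (\<delta> - a - b) = \<delta>
      \<and> a \<noteq> \<delta> \<and> \<delta> - a - b \<noteq> \<delta> \<and> (\<forall>j<\<delta>. brick_type m D j = std_type a b j)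
    \<longrightarrow> (\<exists>j<\<delta>. brick_type m (L ` D) j \<noteq> brick_type m D j)"
    using assms(1) unfolding non_type_preserving_def by (elim allE) assumption
  ultimately show ?thesis
    using assms(4,5) D by (auto simp: a_def b_def)
qed

lemma sbox_layer_not_preserves_congruence:
  assumes "1 < m"
    and gs: "\<forall>j<\<delta>. bij_betw (gs j) {..<2 ^ m} {..<2 ^ m}"
    and L: "bij_betw L {..<2 ^ (m * \<delta>)} {..<2 ^ (m * \<delta>)}"
    and ntp: "non_type_preserving m \<delta> L"
    and "0 < k" and "k < m * \<delta>"
  shows "\<not> preserves_congruence (2 ^ (m * \<delta>)) (2 ^ k) (L \<circ> parallel_sbox m \<delta> gs)"
proof
  assume pres: "preserves_congruence (2 ^ (m * \<delta>)) (2 ^ k) (L \<circ> parallel_sbox m \<delta> gs)"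
  let ?type = "std_type (k div m) (if m dvd k then 0 else 1)"
  have type: "brick_type m (low_bits_class (m * \<delta>) k c) j = ?type j" if "j < \<delta>" and "c < 2 ^ k" for j c
    using assms that by (intro brick_type_low_bits_class) simp_all
  define D where "D = parallel_sbox m \<delta> gs ` low_bits_class (m * \<delta>) k 0"
  have S: "bij_betw (parallel_sbox m \<delta> gs) {..<2 ^ (m * \<delta>)} {..<2 ^ (m * \<delta>)}"
    using gs by (rule parallel_sbox_bij)
  have "D \<subseteq> {..<2 ^ (m * \<delta>)}"
    using S by (auto simp: D_def low_bits_class_def dest: bij_betwE)
  moreover have "D \<noteq> {}"
    by (auto simp: D_def low_bits_class_def intro!: exI[of _ 0])
  moreover have "brick_type m D j = ?type j" if "j < \<delta>" for j
    using gs type that by (simp add: D_def brick_type_parallel_sbox_image)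
  ultimately obtain j where "j < \<delta>" and "brick_type m (L ` D) j \<noteq> ?type j"
    using non_type_preserving_low_bits_type[OF ntp \<open>0 < k\<close> \<open>k < m * \<delta>\<close>] by blast
  moreover have "L ` D = low_bits_class (m * \<delta>) k ((L \<circ> parallel_sbox m \<delta> gs) 0 mod 2 ^ k)"
    unfolding D_def image_comp using bij_betw_trans[OF S L] pres assms
    by (intro image_low_bits_class) simp_all
  ultimately show False
    using type by simp
qed

section \<open>Arithmetic modulo \<open>2\<^sup>n\<close>\<close>

lemma xor_less_pow2: "(a::nat) < 2 ^ n \<Longrightarrow> b < 2 ^ n \<Longrightarrow> xor a b < 2 ^ n"
  by (metis take_bit_nat_eq_self_iff take_bit_xor)

lemma xor_pow2_eq_add: "(y::nat) < 2 ^ k \<Longrightarrow> xor (2 ^ k) y = 2 ^ k + y"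
proof -
  assume "y < 2 ^ k"
  then have "\<not> bit y k"
    by (metis bit_take_bit_iff less_not_refl take_bit_nat_eq_self_iff)
  then have "and (2 ^ k) y = 0"
    by (intro bit_eqI) (auto simp: bit_and_iff bit_exp_iff)
  then show ?thesis
    by (simp add: disjunctive_add_eq_xor)
qed

lemma xor_half_eq_add_mod:
  assumes "0 < n" and "(y::nat) < 2 ^ n"
  shows "xor (2 ^ (n - 1)) y = (y + 2 ^ (n - 1)) mod 2 ^ n"
proof -
  have N: "(2::nat) ^ n = 2 ^ (n - 1) + 2 ^ (n - 1)"
    using assms(1) by (simp flip: mult_2 power_Suc)
  show ?thesis
  proof (cases "y < 2 ^ (n - 1)")
    case True
    then show ?thesis
      using N by (simp add: xor_pow2_eq_add)
  next
    case False
    define y' where "y' = y - 2 ^ (n - 1)"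
    have y': "y' < 2 ^ (n - 1)" "y = 2 ^ (n - 1) + y'"
      using False assms(2) N by (auto simp: y'_def)
    then have "xor (2 ^ (n - 1)) y = xor (2 ^ (n - 1)) (xor (2 ^ (n - 1)) y')"
      by (simp add: xor_pow2_eq_add)
    then have "xor (2 ^ (n - 1)) y = y'"
      by (simp flip: xor.assoc)
    moreover have "y + 2 ^ (n - 1) = y' + 2 ^ n" and "y' < 2 ^ n"
      using y' N by simp_all
    then have "(y + 2 ^ (n - 1)) mod 2 ^ n = y'"
      by (simp only: mod_add_self2 mod_less)
    ultimately show ?thesis
      by simp
  qed
qed

definition sub_mod :: "nat \<Rightarrow> nat \<Rightarrow> nat \<Rightarrow> nat" where
  "sub_mod N a b = (a + (N - b)) mod N"

lemma sub_mod_less: "0 < N \<Longrightarrow> sub_mod N a b < N"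
  by (simp add: sub_mod_def)

lemma add_sub_mod: "b < N \<Longrightarrow> a < N \<Longrightarrow> (b + sub_mod N a b) mod N = a"
  by (simp add: sub_mod_def mod_add_right_eq)

lemma sub_mod_add_cancel:
  assumes "b \<le> N" and "a < N"
  shows "sub_mod N ((a + b) mod N) b = a"
proof -
  have "sub_mod N ((a + b) mod N) b = (a + b + (N - b)) mod N"
    by (simp only: sub_mod_def mod_add_left_eq)
  also have "a + b + (N - b) = a + N"
    using assms(1) by simp
  finally show ?thesis
    using assms(2) by simp
qed

lemma sub_mod_self: "b \<le> N \<Longrightarrow> sub_mod N b b = 0"
  by (simp add: sub_mod_def)

lemma sub_mod_eq_0_iff: "a < N \<Longrightarrow> b < N \<Longrightarrow> sub_mod N a b = 0 \<longleftrightarrow> a = b"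
  using add_sub_mod[of b N a] by (auto simp: sub_mod_self)

lemma pow2_dvd_sub_mod_iff:
  assumes "k \<le> n" and "a < 2 ^ n" and "b < 2 ^ n"
  shows "2 ^ k dvd sub_mod (2 ^ n) a b \<longleftrightarrow> a mod 2 ^ k = b mod (2::nat) ^ k"
proof -
  have k: "(2::nat) ^ k dvd 2 ^ n"
    using assms(1) by (simp add: le_imp_power_dvd)
  have "2 ^ k dvd sub_mod (2 ^ n) a b \<longleftrightarrow> 2 ^ k dvd (a + 2 ^ n) - b"
    using k assms(3) by (simp add: sub_mod_def mod_mod_cancel dvd_eq_mod_eq_0)
  also have "\<dots> \<longleftrightarrow> (a + 2 ^ n) mod 2 ^ k = b mod 2 ^ k"
    using assms(3) by (simp add: mod_eq_dvd_iff_nat)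
  also have "(a + 2 ^ n) mod 2 ^ k = a mod 2 ^ k"
    using k by (auto elim!: dvdE)
  finally show ?thesis .
qed

locale mod_subgroup =
  fixes N :: nat and K :: "nat set"
  assumes subset: "K \<subseteq> {..<N}"
    and add_mem: "\<And>a b. a \<in> K \<Longrightarrow> b \<in> K \<Longrightarrow> (a + b) mod N \<in> K"
    and neg_mem: "\<And>a. a \<in> K \<Longrightarrow> (N - a) mod N \<in> K"
begin

lemma zero_mem:
  assumes "a \<in> K"
  shows "0 \<in> K"
proof -
  have "(a + (N - a) mod N) mod N \<in> K"
    using assms by (intro add_mem neg_mem)
  moreover have "a < N"
    using assms subset by auto
  ultimately show ?thesis
    by (simp add: mod_add_right_eq)
qed

lemma mult_mem: "a \<in> K \<Longrightarrow> (j * a) mod N \<in> K"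
  by (induction j) (auto simp: zero_mem mod_add_right_eq dest: add_mem)

lemma diff_mem:
  assumes "a \<in> K" and "b \<in> K" and "b \<le> a"
  shows "a - b \<in> K"
proof -
  have "a < N"
    using assms(1) subset by auto
  then have "a + (N - b) = (a - b) + N" and "a - b < N"
    using assms(3) by simp_all
  then have "(a + (N - b) mod N) mod N = a - b"
    by (simp only: mod_add_right_eq mod_add_self2 mod_less)
  then show ?thesis
    using add_mem[OF assms(1) neg_mem[OF assms(2)]] by simp
qed

lemma mod_mem:
  assumes "b \<in> K" and "g \<in> K"
  shows "b mod g \<in> K"
proof -
  have "b div g * g < N"
    using assms(1) subset by (meson div_times_less_eq_dividend le_less_trans lessThan_iff subsetD)
  then have "b div g * g \<in> K"
    using mult_mem[OF assms(2), of "b div g"] by simp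
  then have "b - b div g * g \<in> K"
    using assms(1) by (intro diff_mem) simp_all
  then show ?thesis
    by (simp add: minus_div_mult_eq_mod)
qed

lemma modulus_mod_mem:
  assumes "g \<in> K" and "0 < g"
  shows "N mod g \<in> K"
proof (cases "N div g * g = N")
  case True
  then show ?thesis
    using zero_mem[OF assms(1)] by (metis minus_div_mult_eq_mod diff_self_eq_0)
next
  case False
  then have less: "N div g * g < N"
    using div_times_less_eq_dividend le_neq_implies_less by blast
  then have "N div g * g \<in> K"
    using mult_mem[OF assms(1), of "N div g"] by simp
  moreover have "0 < N div g"
    using assms subset by (auto simp: div_greater_zero_iff)
  ultimately have "N - N div g * g \<in> K"
    using neg_mem less assms(2) by fastforce
  then show ?thesis
    by (simp add: minus_div_mult_eq_mod)
qed

lemma eq_multiples: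
  assumes "h \<in> K" and "0 < h"
  obtains g where "g dvd N" and "g dvd h" and "\<And>b. b \<in> K \<longleftrightarrow> b < N \<and> g dvd b"
proof -
  define g where "g = (LEAST g. g \<in> K \<and> 0 < g)"
  have "g \<in> K \<and> 0 < g"
    unfolding g_def by (rule LeastI[of _ h]) (simp add: assms)
  then have g: "g \<in> K" "0 < g"
    by simp_all
  have g_dvd: "g dvd b" if "b \<in> K" for b
  proof (rule ccontr)
    assume "\<not> g dvd b"
    then have "b mod g \<in> K" and "0 < b mod g"
      using mod_mem[OF that g(1)] by (simp_all add: dvd_eq_mod_eq_0)
    then have "g \<le> b mod g"
      unfolding g_def by (simp add: Least_le)
    then show False
      using mod_less_divisor[OF g(2), of b] by simp
  qed
  have "g dvd N"
  proof (rule ccontr)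
    assume "\<not> g dvd N"
    then have "N mod g \<in> K" and "0 < N mod g"
      using modulus_mod_mem[OF g] by (simp_all add: dvd_eq_mod_eq_0)
    then have "g \<le> N mod g"
      unfolding g_def by (simp add: Least_le)
    then show False
      using mod_less_divisor[OF g(2), of N] by simp
  qed
  moreover have "b \<in> K" if "b < N" and "g dvd b" for b
    using mult_mem[OF g(1), of "b div g"] that by simp
  ultimately show ?thesis
    using that g_dvd assms subset by blast
qed

end

lemma double_mod_pow2_eq_0:
  assumes "0 < n" and "w < 2 ^ n" and "(2 * w) mod 2 ^ n = (0::nat)"
  shows "w \<in> {0, 2 ^ (n - 1)}"
proof -
  have N: "(2::nat) ^ n = 2 * 2 ^ (n - 1)"
    using assms(1) by (simp flip: power_Suc)
  obtain t where t: "2 * w = 2 ^ n * t"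
    using assms(3) by auto
  have "2 ^ n * t < 2 ^ n * (2::nat)"
    using assms(2) unfolding t[symmetric] by simp
  then have "t = 0 \<or> t = 1"
    by (simp add: less_2_cases_iff)
  then show ?thesis
    using t N by auto
qed

lemma multiple_of_order_two:
  fixes u v :: nat
  assumes "0 < n" and "u < 2 ^ n" and "v < 2 ^ n" and "u \<noteq> 0 \<or> v \<noteq> 0"
  obtains j where "(j * u) mod 2 ^ n \<in> {0, 2 ^ (n - 1)}" and "(j * v) mod 2 ^ n \<in> {0, 2 ^ (n - 1)}"
    and "(j * u) mod 2 ^ n \<noteq> 0 \<or> (j * v) mod 2 ^ n \<noteq> 0"
proof -
  define Q where "Q i \<longleftrightarrow> (2 ^ i * u) mod 2 ^ n = 0 \<and> (2 ^ i * v) mod (2::nat) ^ n = 0" for i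
  define i where "i = (LEAST i. Q i)"
  have "Q i"
    unfolding i_def by (rule LeastI[of _ n]) (simp add: Q_def)
  moreover have "i \<noteq> 0"
  proof
    assume "i = 0"
    then show False
      using \<open>Q i\<close> assms by (simp add: Q_def)
  qed
  then obtain i' where i': "i = Suc i'"
    using not0_implies_Suc by blast
  then have "\<not> Q i'"
    unfolding i_def using not_less_Least[of i' Q] by simp
  moreover have "(2 ^ i' * x) mod 2 ^ n \<in> {0, 2 ^ (n - 1)}" if "(2 ^ i * x) mod (2::nat) ^ n = 0" for x
  proof (rule double_mod_pow2_eq_0[OF assms(1)])
    show "(2 * ((2 ^ i' * x) mod 2 ^ n)) mod 2 ^ n = 0"
      using that by (simp add: i' mod_mult_right_eq mult.assoc)
  qed simp
  ultimately show ?thesis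
    using that[of "2 ^ i'"] by (simp add: Q_def)
qed

section \<open>Partitions invariant under translations and the Feistel map\<close>

lemma partition_same_block_preimage:
  assumes P: "partition_on X P" and f: "inj_on f X" and inv: "\<And>B. B \<in> P \<Longrightarrow> f ` B \<in> P"
    and "x \<in> X" and "y \<in> X" and "B \<in> P" and "f x \<in> B" and "f y \<in> B"
  shows "\<exists>B\<in>P. x \<in> B \<and> y \<in> B"
proof -
  obtain C where C: "C \<in> P" "x \<in> C"
    using P \<open>x \<in> X\<close> by (auto simp: partition_on_def)
  have "f ` C = B"
    using P C inv \<open>B \<in> P\<close> \<open>f x \<in> B\<close> unfolding partition_on_def disjoint_def by blast
  then obtain z where "z \<in> C" and "f y = f z"
    using \<open>f y \<in> B\<close> by auto
  moreover have "C \<subseteq> X"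
    using P C by (auto simp: partition_on_def)
  ultimately have "y \<in> C"
    using f \<open>y \<in> X\<close> by (metis inj_on_eq_iff subsetD)
  then show ?thesis
    using C by blast
qed

lemma Vspace_iff: "x \<in> Vspace n \<longleftrightarrow> fst x < 2 ^ n \<and> snd x < 2 ^ n"
  by (cases x) (simp add: Vspace_def)

lemma sigma_in_Vspace: "sigma n k x \<in> Vspace n"
  by (simp add: Vspace_iff sigma_def)

lemma sigma_zero: "x \<in> Vspace n \<Longrightarrow> sigma n (0, 0) x = x"
  by (simp add: Vspace_iff sigma_def prod_eq_iff)

lemma sigma_commute: "sigma n k x = sigma n x k"
  by (simp add: sigma_def add.commute)

lemma feistel_in_Vspace:
  "\<forall>z<2 ^ n. \<rho> z < 2 ^ n \<Longrightarrow> x \<in> Vspace n \<Longrightarrow> feistel \<rho> x \<in> Vspace n"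
  by (simp add: Vspace_iff feistel_def xor_less_pow2)

lemma feistel_bij:
  assumes "\<forall>z<2 ^ n. \<rho> z < 2 ^ n"
  shows "bij_betw (feistel \<rho>) (Vspace n) (Vspace n)"
proof (rule bij_betw_byWitness[where f' = "\<lambda>y. (xor (snd y) (\<rho> (fst y)), fst y)"])
  show "feistel \<rho> ` Vspace n \<subseteq> Vspace n"
    using assms feistel_in_Vspace by blast
  show "(\<lambda>y. (xor (snd y) (\<rho> (fst y)), fst y)) ` Vspace n \<subseteq> Vspace n"
    using assms by (auto simp: Vspace_iff xor_less_pow2)
qed (simp_all add: feistel_def xor.assoc)

definition vsub :: "nat \<Rightarrow> nat \<times> nat \<Rightarrow> nat \<times> nat \<Rightarrow> nat \<times> nat" where
  "vsub n y x = (sub_mod (2 ^ n) (fst y) (fst x), sub_mod (2 ^ n) (snd y) (snd x))"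

lemma vsub_in_Vspace: "vsub n y x \<in> Vspace n"
  by (simp add: vsub_def Vspace_iff sub_mod_less)

lemma sigma_vsub: "x \<in> Vspace n \<Longrightarrow> y \<in> Vspace n \<Longrightarrow> sigma n (vsub n y x) x = y"
  by (simp add: vsub_def sigma_def Vspace_iff add_sub_mod prod_eq_iff)

lemma sigma_neg: "sigma n (vsub n (0, 0) x) y = vsub n y x"
  by (simp add: vsub_def sigma_def sub_mod_def mod_add_right_eq)

lemma inj_on_sigma:
  assumes "k \<in> Vspace n"
  shows "inj_on (sigma n k) (Vspace n)"
proof (rule inj_on_inverseI)
  fix x
  assume "x \<in> Vspace n"
  then show "sigma n (vsub n (0, 0) k) (sigma n k x) = x"
    using assms unfolding sigma_neg
    by (simp add: vsub_def sigma_def Vspace_iff sub_mod_add_cancel prod_eq_iff)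
qed

lemma partition_on_eq_single_block:
  assumes P: "partition_on X P" and "X \<noteq> {}"
    and related: "\<And>x y. x \<in> X \<Longrightarrow> y \<in> X \<Longrightarrow> \<exists>B\<in>P. x \<in> B \<and> y \<in> B"
  shows "P = {X}"
proof -
  have "B = X" if "B \<in> P" for B
  proof
    show "B \<subseteq> X"
      using P that by (auto simp: partition_on_def)
    have "B \<noteq> {}"
      using P that by (auto simp: partition_on_def)
    then obtain x where "x \<in> B"
      by blast
    show "X \<subseteq> B"
    proof
      fix y
      assume "y \<in> X"
      then obtain C where "C \<in> P" "x \<in> C" "y \<in> C"
        using related \<open>x \<in> B\<close> \<open>B \<subseteq> X\<close> by blast
      then show "y \<in> B"
        using P that \<open>x \<in> B\<close> unfolding partition_on_def disjoint_def by blast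
    qed
  qed
  moreover have "P \<noteq> {}"
    using P \<open>X \<noteq> {}\<close> by (auto simp: partition_on_def)
  ultimately show ?thesis
    by blast
qed

lemma partition_on_eq_singletons:
  assumes P: "partition_on X P" and small: "\<And>B x y. B \<in> P \<Longrightarrow> x \<in> B \<Longrightarrow> y \<in> B \<Longrightarrow> x = y"
  shows "P = {{x} | x. x \<in> X}"
proof (intro equalityI subsetI)
  fix B
  assume "B \<in> P"
  moreover have "B \<noteq> {}" and "B \<subseteq> X"
    using P \<open>B \<in> P\<close> by (auto simp: partition_on_def)
  ultimately show "B \<in> {{x} | x. x \<in> X}"
    using small by blast
next
  fix C
  assume "C \<in> {{x} | x. x \<in> X}"
  then obtain x where C: "C = {x}" and "x \<in> X"
    by blast
  then obtain B where "B \<in> P" and "x \<in> B"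
    using P by (auto simp: partition_on_def)
  then have "B = C"
    using small C by blast
  then show "C \<in> P"
    using \<open>B \<in> P\<close> by simp
qed

locale feistel_invariant_partition =
  fixes n :: nat and \<rho> :: "nat \<Rightarrow> nat" and P :: "(nat \<times> nat) set set"
  assumes n_pos: "0 < n"
    and rho_bij: "bij_betw \<rho> {..<2 ^ n} {..<2 ^ n}"
    and partition: "partition_on (Vspace n) P"
    and round_invariant: "\<And>k B. k \<in> Vspace n \<Longrightarrow> B \<in> P \<Longrightarrow> feistel \<rho> ` sigma n k ` B \<in> P"
      \<comment> \<open>invariance under the generators \<open>\<sigma>\<^sub>k \<P> \<sigma>\<^sub>0\<close> of \<open>\<Gamma>\<^sub>\<infinity>\<close>\<close>
begin

lemma rho_less: "\<forall>x<2 ^ n. \<rho> x < 2 ^ n"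
  using rho_bij by (auto dest: bij_betwE)

definition same_block :: "nat \<times> nat \<Rightarrow> nat \<times> nat \<Rightarrow> bool" where
  "same_block x y \<longleftrightarrow> (\<exists>B\<in>P. x \<in> B \<and> y \<in> B)"

lemma same_block_in_Vspace: "same_block x y \<Longrightarrow> x \<in> Vspace n \<and> y \<in> Vspace n"
  using partition by (auto simp: same_block_def partition_on_def)

lemma same_block_refl: "x \<in> Vspace n \<Longrightarrow> same_block x x"
  using partition by (auto simp: same_block_def partition_on_def)

lemma same_block_sym: "same_block x y \<Longrightarrow> same_block y x"
  by (auto simp: same_block_def)

lemma same_block_trans:
  assumes "same_block x y" and "same_block y z"
  shows "same_block x z"
proof -
  obtain B C where "B \<in> P" "x \<in> B" "y \<in> B" and "C \<in> P" "y \<in> C" "z \<in> C"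
    using assms by (auto simp: same_block_def)
  moreover have "B = C"
    using partition_onD2[OF partition] calculation by (auto simp: disjoint_def)
  ultimately show ?thesis
    by (auto simp: same_block_def)
qed

lemma same_block_round_iff:
  assumes "k \<in> Vspace n" and "x \<in> Vspace n" and "y \<in> Vspace n"
  shows "same_block (feistel \<rho> (sigma n k x)) (feistel \<rho> (sigma n k y)) \<longleftrightarrow> same_block x y"
proof
  assume "same_block (feistel \<rho> (sigma n k x)) (feistel \<rho> (sigma n k y))"
  then obtain B where B: "B \<in> P" "(feistel \<rho> \<circ> sigma n k) x \<in> B" "(feistel \<rho> \<circ> sigma n k) y \<in> B"
    by (auto simp: same_block_def)
  have "inj_on (feistel \<rho> \<circ> sigma n k) (Vspace n)"
    using feistel_bij[OF rho_less] inj_on_sigma[OF assms(1)]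
    by (intro comp_inj_on) (auto simp: bij_betw_def sigma_in_Vspace intro: inj_on_subset)
  moreover have "(feistel \<rho> \<circ> sigma n k) ` C \<in> P" if "C \<in> P" for C
    using round_invariant[OF assms(1) that] by (simp add: image_comp)
  ultimately show "same_block x y"
    unfolding same_block_def by (rule partition_same_block_preimage[OF partition _ _ assms(2,3) B])
next
  assume "same_block x y"
  then obtain B where "B \<in> P" "x \<in> B" "y \<in> B"
    by (auto simp: same_block_def)
  then have "feistel \<rho> (sigma n k x) \<in> feistel \<rho> ` sigma n k ` B"
    and "feistel \<rho> (sigma n k y) \<in> feistel \<rho> ` sigma n k ` B"
    by simp_all
  then show "same_block (feistel \<rho> (sigma n k x)) (feistel \<rho> (sigma n k y))"
    unfolding same_block_def using round_invariant[OF assms(1) \<open>B \<in> P\<close>] by (intro bexI conjI)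
qed

lemma same_block_feistel_iff:
  "x \<in> Vspace n \<Longrightarrow> y \<in> Vspace n \<Longrightarrow> same_block (feistel \<rho> x) (feistel \<rho> y) \<longleftrightarrow> same_block x y"
  using same_block_round_iff[of "(0, 0)" x y] by (simp add: Vspace_iff sigma_zero)

lemma same_block_sigma:
  assumes "same_block x y" and "k \<in> Vspace n"
  shows "same_block (sigma n k x) (sigma n k y)"
proof -
  \<comment> \<open>\<open>\<sigma>\<^sub>k\<close> is not a generator, but \<open>\<sigma>\<^sub>k \<P>\<close> is, and \<open>\<P>\<close> also reflects blocks.\<close>
  have "same_block (feistel \<rho> (sigma n k x)) (feistel \<rho> (sigma n k y))"
    using assms same_block_in_Vspace same_block_round_iff by blast
  then show ?thesis
    using same_block_feistel_iff sigma_in_Vspace by blast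
qed

definition zero_block :: "(nat \<times> nat) set" where
  "zero_block = {u. same_block (0, 0) u}"

lemma zero_block_in_Vspace: "u \<in> zero_block \<Longrightarrow> u \<in> Vspace n"
  using same_block_in_Vspace by (simp add: zero_block_def)

lemma same_block_translate:
  assumes "u \<in> zero_block" and "x \<in> Vspace n"
  shows "same_block x (sigma n u x)"
proof -
  have "same_block (sigma n x (0, 0)) (sigma n x u)"
    using assms by (intro same_block_sigma) (simp_all add: zero_block_def)
  moreover have "sigma n x (0, 0) = x"
    using assms(2) by (metis sigma_commute sigma_zero)
  ultimately show ?thesis
    by (simp add: sigma_commute)
qed

lemma same_block_iff_vsub:
  "same_block x y \<longleftrightarrow> x \<in> Vspace n \<and> y \<in> Vspace n \<and> vsub n y x \<in> zero_block"
proof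
  assume xy: "same_block x y"
  then have "same_block (sigma n (vsub n (0, 0) x) x) (sigma n (vsub n (0, 0) x) y)"
    by (rule same_block_sigma) (rule vsub_in_Vspace)
  moreover have "vsub n x x = (0, 0)"
    using same_block_in_Vspace[OF xy] by (simp add: vsub_def sub_mod_self Vspace_iff)
  ultimately show "x \<in> Vspace n \<and> y \<in> Vspace n \<and> vsub n y x \<in> zero_block"
    using xy same_block_in_Vspace by (simp add: sigma_neg zero_block_def)
next
  assume "x \<in> Vspace n \<and> y \<in> Vspace n \<and> vsub n y x \<in> zero_block"
  then show "same_block x y"
    using same_block_translate[of "vsub n y x" x] by (simp add: sigma_vsub)
qed

lemma zero_block_add: "u \<in> zero_block \<Longrightarrow> v \<in> zero_block \<Longrightarrow> sigma n u v \<in> zero_block"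
  using same_block_translate[of u v] zero_block_in_Vspace same_block_trans
  by (auto simp: zero_block_def)

lemma zero_block_mult:
  assumes "u \<in> zero_block"
  shows "((j * fst u) mod 2 ^ n, (j * snd u) mod 2 ^ n) \<in> zero_block"
proof (induction j)
  case 0
  then show ?case
    using same_block_refl by (simp add: zero_block_def Vspace_iff)
next
  case (Suc j)
  then show ?case
    using zero_block_add[OF assms Suc] by (simp add: sigma_def mod_add_right_eq add.commute)
qed

lemma vertical_subgroup: "mod_subgroup (2 ^ n) {b. (0, b) \<in> zero_block}"
proof
  show "{b. (0, b) \<in> zero_block} \<subseteq> {..<2 ^ n}"
    using zero_block_in_Vspace by (auto simp: Vspace_iff)
  fix a b
  assume "a \<in> {b. (0, b) \<in> zero_block}" and "b \<in> {b. (0, b) \<in> zero_block}"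
  then show "(a + b) mod 2 ^ n \<in> {b. (0, b) \<in> zero_block}"
    using zero_block_add[of "(0, a)" "(0, b)"] by (simp add: sigma_def add.commute)
next
  fix a
  assume "a \<in> {b. (0, b) \<in> zero_block}"
  then have "same_block (0, a) (0, 0)"
    by (simp add: zero_block_def same_block_sym)
  then show "(2 ^ n - a) mod 2 ^ n \<in> {b. (0, b) \<in> zero_block}"
    by (simp add: same_block_iff_vsub vsub_def sub_mod_def)
qed

lemma zero_block_vertical:
  "same_block (x, y) (x, y') \<Longrightarrow> (0, sub_mod (2 ^ n) y' y) \<in> zero_block"
  by (auto simp: same_block_iff_vsub vsub_def sub_mod_self Vspace_iff)

lemma zero_block_swap:
  assumes "(0, b) \<in> zero_block"
  shows "(b, 0) \<in> zero_block"
proof -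
  obtain y where y: "y < 2 ^ n" "\<rho> y = 0"
    using rho_bij n_pos by (metis bij_betw_iff_bijections lessThan_iff zero_less_numeral zero_less_power)
  have b: "b < 2 ^ n"
    using zero_block_in_Vspace[OF assms] by (simp add: Vspace_iff)
  have "same_block (y, 0) (y, b)"
    using same_block_translate[OF assms, of "(y, 0)"] y b by (simp add: sigma_def Vspace_iff)
  then have "same_block (feistel \<rho> (0, y)) (feistel \<rho> (b, y))"
    using y by (simp add: feistel_def)
  then have "same_block (0, y) (b, y)"
    using y b by (simp add: same_block_feistel_iff Vspace_iff)
  then show ?thesis
    using y b by (simp add: same_block_iff_vsub vsub_def sub_mod_self sub_mod_def)
qed

lemma same_block_feistel_shift:
  assumes "(a, b) \<in> zero_block" and "a \<in> {0, 2 ^ (n - 1)}" and "y < 2 ^ n"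
  shows "same_block (y, \<rho> y) ((y + b) mod 2 ^ n, (\<rho> ((y + b) mod 2 ^ n) + a) mod 2 ^ n)"
proof -
  define y' where "y' = (y + b) mod 2 ^ n"
  have "a < 2 ^ n"
    using zero_block_in_Vspace[OF assms(1)] by (simp add: Vspace_iff)
  then have "same_block (0, y) (a, y')"
    using same_block_translate[OF assms(1), of "(0, y)"] assms(3) by (simp add: sigma_def Vspace_iff y'_def)
  then have "same_block (feistel \<rho> (0, y)) (feistel \<rho> (a, y'))"
    using same_block_feistel_iff same_block_in_Vspace by blast
  moreover have "xor a (\<rho> y') = (\<rho> y' + a) mod 2 ^ n"
    using assms(2) rho_less n_pos xor_half_eq_add_mod[of n "\<rho> y'"] by (auto simp: y'_def)
  ultimately show ?thesis
    by (simp add: feistel_def y'_def)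
qed

lemma half_from_vertical:
  assumes "(0, d) \<in> zero_block" and "d \<noteq> 0"
  shows "(0, 2 ^ (n - 1)) \<in> zero_block"
proof -
  have "d < 2 ^ n"
    using zero_block_in_Vspace[OF assms(1)] by (simp add: Vspace_iff)
  then obtain j where "(j * d) mod 2 ^ n \<in> {0, 2 ^ (n - 1)}" and "(j * d) mod 2 ^ n \<noteq> 0"
    using multiple_of_order_two[of n 0 d] n_pos assms(2) by auto
  then show ?thesis
    using zero_block_mult[OF assms(1), of j] by auto
qed

lemma vertical_half_if_horizontal_half:
  assumes "(2 ^ (n - 1), 0) \<in> zero_block"
  shows "(0, 2 ^ (n - 1)) \<in> zero_block"
proof -
  let ?h = "2 ^ (n - 1) :: nat"
  have "\<rho> 0 < 2 ^ n" and "?h < 2 ^ n"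
    using rho_less n_pos by simp_all
  moreover have "same_block (0, \<rho> 0) (0, (\<rho> 0 + ?h) mod 2 ^ n)"
    using same_block_feistel_shift[OF assms, of 0] n_pos by simp
  then have "(0, sub_mod (2 ^ n) ((?h + \<rho> 0) mod 2 ^ n) (\<rho> 0)) \<in> zero_block"
    by (simp add: add.commute zero_block_vertical)
  ultimately show ?thesis
    by (simp add: sub_mod_add_cancel)
qed

lemma vertical_half_if_diagonal_half:
  assumes "(2 ^ (n - 1), 2 ^ (n - 1)) \<in> zero_block"
  shows "(0, 2 ^ (n - 1)) \<in> zero_block"
proof -
  let ?h = "2 ^ (n - 1) :: nat"
  have h: "?h < 2 ^ n" "0 < ?h" and rho0: "\<rho> 0 < 2 ^ n"
    using n_pos rho_less by simp_all
  have "same_block (0, \<rho> 0) (sigma n (?h, ?h) (0, \<rho> 0))"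
    using assms rho0 by (intro same_block_translate) (simp_all add: Vspace_iff)
  moreover have "same_block (0, \<rho> 0) (?h, (\<rho> ?h + ?h) mod 2 ^ n)"
    using same_block_feistel_shift[OF assms, of 0] h by simp
  ultimately have "same_block (?h, (\<rho> 0 + ?h) mod 2 ^ n) (?h, (\<rho> ?h + ?h) mod 2 ^ n)"
    using h by (simp add: sigma_def) (meson same_block_sym same_block_trans)
  then have "(0, sub_mod (2 ^ n) ((\<rho> ?h + ?h) mod 2 ^ n) ((\<rho> 0 + ?h) mod 2 ^ n)) \<in> zero_block"
    by (rule zero_block_vertical)
  moreover have "\<rho> ?h \<noteq> \<rho> 0"
    using rho_bij h by (auto simp: bij_betw_def dest: inj_onD)
  then have "(\<rho> ?h + ?h) mod 2 ^ n \<noteq> (\<rho> 0 + ?h) mod 2 ^ n"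
    using sub_mod_add_cancel[of ?h "2 ^ n" "\<rho> ?h"] sub_mod_add_cancel[of ?h "2 ^ n" "\<rho> 0"]
      rho_less h by auto
  then have "sub_mod (2 ^ n) ((\<rho> ?h + ?h) mod 2 ^ n) ((\<rho> 0 + ?h) mod 2 ^ n) \<noteq> 0"
    by (simp add: sub_mod_eq_0_iff)
  ultimately show ?thesis
    by (rule half_from_vertical)
qed

lemma half_in_zero_block:
  assumes "u \<in> zero_block" and "u \<noteq> (0, 0)"
  shows "(0, 2 ^ (n - 1)) \<in> zero_block"
proof -
  have "fst u < 2 ^ n" and "snd u < 2 ^ n"
    using zero_block_in_Vspace[OF assms(1)] by (simp_all add: Vspace_iff)
  moreover have "fst u \<noteq> 0 \<or> snd u \<noteq> 0"
    using assms(2) by (cases u) simp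
  ultimately obtain j where "(j * fst u) mod 2 ^ n \<in> {0, 2 ^ (n - 1)}"
    and "(j * snd u) mod 2 ^ n \<in> {0, 2 ^ (n - 1)}"
    and "(j * fst u) mod 2 ^ n \<noteq> 0 \<or> (j * snd u) mod 2 ^ n \<noteq> 0"
    by (rule multiple_of_order_two[OF n_pos])
  moreover have "((j * fst u) mod 2 ^ n, (j * snd u) mod 2 ^ n) \<in> zero_block"
    by (rule zero_block_mult[OF assms(1)])
  ultimately consider "(0, 2 ^ (n - 1)) \<in> zero_block" | "(2 ^ (n - 1), 0) \<in> zero_block"
    | "(2 ^ (n - 1), 2 ^ (n - 1)) \<in> zero_block"
    by auto
  then show ?thesis
    using vertical_half_if_horizontal_half vertical_half_if_diagonal_half by cases
qed

lemma vertical_zero_block_eq_multiples: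
  assumes "zero_block \<noteq> {(0, 0)}"
  obtains k where "k < n" and "\<And>b. (0, b) \<in> zero_block \<longleftrightarrow> b < 2 ^ n \<and> 2 ^ k dvd b"
proof -
  have "(0, 0) \<in> zero_block"
    by (simp add: zero_block_def same_block_refl Vspace_iff)
  then obtain u where "u \<in> zero_block" and "u \<noteq> (0, 0)"
    using assms by auto
  then have "(0, 2 ^ (n - 1)) \<in> zero_block"
    by (rule half_in_zero_block)
  then obtain g where g: "g dvd 2 ^ n" "g dvd 2 ^ (n - 1)"
    and K: "\<And>b. (0, b) \<in> zero_block \<longleftrightarrow> b < 2 ^ n \<and> g dvd b"
    using mod_subgroup.eq_multiples[OF vertical_subgroup, of "2 ^ (n - 1)"] n_pos by auto
  obtain k where "g = 2 ^ k"
    using g(1) divides_primepow_nat[of 2 g n] by auto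
  moreover have "k < n"
    using g n_pos \<open>g = 2 ^ k\<close> by (simp add: dvd_power_iff_le)
  ultimately show ?thesis
    using K by (intro that[of k]) simp_all
qed

context
  fixes k :: nat
  assumes k_less: "k < n"
    and vertical: "\<And>b. (0, b) \<in> zero_block \<longleftrightarrow> b < 2 ^ n \<and> 2 ^ k dvd b"
begin

lemma same_block_if_congruent:
  assumes "x \<in> Vspace n" and "y \<in> Vspace n"
    and "fst x mod 2 ^ k = fst y mod 2 ^ k" and "snd x mod 2 ^ k = snd y mod 2 ^ k"
  shows "same_block x y"
proof -
  obtain s t where st: "vsub n y x = (s, t)"
    by (cases "vsub n y x")
  have "2 ^ k dvd s" and "2 ^ k dvd t" and "s < 2 ^ n" and "t < 2 ^ n"
    using st assms k_less vsub_in_Vspace[of n y x]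
    by (auto simp: vsub_def Vspace_iff pow2_dvd_sub_mod_iff)
  then have "(s, 0) \<in> zero_block" and "(0, t) \<in> zero_block"
    using vertical zero_block_swap by simp_all
  then have "sigma n (s, 0) (0, t) \<in> zero_block"
    by (rule zero_block_add)
  then have "vsub n y x \<in> zero_block"
    using st \<open>s < 2 ^ n\<close> \<open>t < 2 ^ n\<close> by (simp add: sigma_def)
  then show ?thesis
    using assms by (simp add: same_block_iff_vsub)
qed

lemma congruent_if_same_block:
  assumes "same_block (x, y) (x, y')"
  shows "y mod 2 ^ k = y' mod 2 ^ k"
proof -
  have "2 ^ k dvd sub_mod (2 ^ n) y' y"
    using zero_block_vertical[OF assms] vertical by simp
  then show ?thesis
    using same_block_in_Vspace[OF assms] k_less by (simp add: pow2_dvd_sub_mod_iff Vspace_iff)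
qed

lemma rho_preserves_congruence: "preserves_congruence (2 ^ n) (2 ^ k) \<rho>"
  unfolding preserves_congruence_def
proof (intro allI impI)
  fix x x' :: nat
  assume x: "x < 2 ^ n" and x': "x' < 2 ^ n" and cong: "x mod 2 ^ k = x' mod 2 ^ k"
  define d where "d = sub_mod (2 ^ n) x' x"
  have "(0, d) \<in> zero_block"
    using vertical x x' cong k_less by (simp add: d_def sub_mod_less pow2_dvd_sub_mod_iff)
  then have "same_block (x, \<rho> x) (x', \<rho> x')"
    using same_block_feistel_shift[of 0 d x] x x' rho_less by (simp add: d_def add_sub_mod)
  moreover have "same_block (x, \<rho> x) (x', \<rho> x)"
    using x x' cong rho_less by (intro same_block_if_congruent) (simp_all add: Vspace_iff)
  ultimately have "same_block (x', \<rho> x) (x', \<rho> x')"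
    using same_block_sym same_block_trans by meson
  then show "\<rho> x mod 2 ^ k = \<rho> x' mod 2 ^ k"
    by (rule congruent_if_same_block)
qed

lemma partition_single_block_if_vertical_full:
  assumes "k = 0"
  shows "P = {Vspace n}"
proof (rule partition_on_eq_single_block[OF partition])
  show "Vspace n \<noteq> {}"
    using Vspace_iff[of "(0, 0)" n] by auto
  fix x y
  assume "x \<in> Vspace n" and "y \<in> Vspace n"
  then have "same_block x y"
    using assms by (intro same_block_if_congruent) simp_all
  then show "\<exists>B\<in>P. x \<in> B \<and> y \<in> B"
    by (simp add: same_block_def)
qed

end

lemma partition_singletons_if_zero_block_trivial:
  assumes "zero_block = {(0, 0)}"
  shows "P = {{x} | x. x \<in> Vspace n}"
proof (rule partition_on_eq_singletons[OF partition])
  fix B x y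
  assume "B \<in> P" and "x \<in> B" and "y \<in> B"
  then have "same_block x y"
    unfolding same_block_def by (intro bexI[of _ B] conjI)
  then have "vsub n y x = (0, 0)" and "x \<in> Vspace n" and "y \<in> Vspace n"
    using assms by (simp_all add: same_block_iff_vsub)
  then show "x = y"
    by (simp add: vsub_def Vspace_iff sub_mod_eq_0_iff prod_eq_iff)
qed

theorem trivial_or_preserves_congruence:
  "P = {Vspace n} \<or> P = {{x} | x. x \<in> Vspace n}
    \<or> (\<exists>k. 0 < k \<and> k < n \<and> preserves_congruence (2 ^ n) (2 ^ k) \<rho>)"
proof (cases "zero_block = {(0, 0)}")
  case True
  then show ?thesis
    using partition_singletons_if_zero_block_trivial by simp
next
  case False
  then obtain k where k: "k < n" and vertical: "\<And>b. (0, b) \<in> zero_block \<longleftrightarrow> b < 2 ^ n \<and> 2 ^ k dvd b"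
    by (rule vertical_zero_block_eq_multiples) blast
  then show ?thesis
    using partition_single_block_if_vertical_full[OF k vertical] rho_preserves_congruence[OF k vertical]
    by (cases "k = 0") auto
qed

end

section \<open>Primitivity of \<open>\<Gamma>\<^sub>\<infinity>\<close>\<close>

lemma round_in_Gamma_inf:
  assumes "k \<in> Vspace n" and "h \<in> Vspace n"
  shows "restrict (sigma n h \<circ> feistel \<rho> \<circ> sigma n k) (Vspace n) \<in> Gamma_inf n \<rho>"
  unfolding Gamma_inf_def using assms by (intro generate.incl) blast

lemma Gamma_inf_transitive:
  assumes \<rho>: "\<forall>z<2 ^ n. \<rho> z < 2 ^ n" and "x \<in> Vspace n" and "y \<in> Vspace n"
  shows "\<exists>g\<in>Gamma_inf n \<rho>. g x = y"
proof
  let ?h = "vsub n y (feistel \<rho> x)"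
  show "restrict (sigma n ?h \<circ> feistel \<rho> \<circ> sigma n (0, 0)) (Vspace n) \<in> Gamma_inf n \<rho>"
    using vsub_in_Vspace[of n y "feistel \<rho> x"] by (intro round_in_Gamma_inf) (simp_all add: Vspace_iff)
  show "restrict (sigma n ?h \<circ> feistel \<rho> \<circ> sigma n (0, 0)) (Vspace n) x = y"
    using assms by (simp add: sigma_zero sigma_vsub feistel_in_Vspace)
qed

lemma feistel_invariant_partition_if_Gamma_inf_invariant:
  assumes "0 < n" and "bij_betw \<rho> {..<2 ^ n} {..<2 ^ n}" and P: "partition_on (Vspace n) P"
    and inv: "\<forall>g\<in>Gamma_inf n \<rho>. \<forall>B\<in>P. g ` B \<in> P"
  shows "feistel_invariant_partition n \<rho> P"
proof
  fix k B
  assume k: "k \<in> Vspace n" and B: "B \<in> P"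
  have "restrict (sigma n (0, 0) \<circ> feistel \<rho> \<circ> sigma n k) (Vspace n) \<in> Gamma_inf n \<rho>"
    using k by (intro round_in_Gamma_inf) (simp_all add: Vspace_iff)
  then have image: "restrict (sigma n (0, 0) \<circ> feistel \<rho> \<circ> sigma n k) (Vspace n) ` B \<in> P"
    using inv B by blast
  have "B \<subseteq> Vspace n"
    using P B by (auto simp: partition_on_def)
  moreover have "\<forall>z<2 ^ n. \<rho> z < 2 ^ n"
    using assms(2) by (auto dest: bij_betwE)
  ultimately have "restrict (sigma n (0, 0) \<circ> feistel \<rho> \<circ> sigma n k) (Vspace n) ` B
      = feistel \<rho> ` sigma n k ` B"
    unfolding image_image
    by (intro image_cong) (auto simp: sigma_zero feistel_in_Vspace sigma_in_Vspace)
  with image show "feistel \<rho> ` sigma n k ` B \<in> P"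
    by simp
qed (use assms in simp_all)

theorem Gamma_inf_primitive:
  assumes "0 < n" and \<rho>: "bij_betw \<rho> {..<2 ^ n} {..<2 ^ n}"
    and no_congruence: "\<And>k. 0 < k \<Longrightarrow> k < n \<Longrightarrow> \<not> preserves_congruence (2 ^ n) (2 ^ k) \<rho>"
  shows "primitive_on (Vspace n) (Gamma_inf n \<rho>)"
  unfolding primitive_on_def
proof (intro conjI allI impI ballI)
  show "\<exists>g\<in>Gamma_inf n \<rho>. g x = y" if "x \<in> Vspace n" and "y \<in> Vspace n" for x y
    using \<rho> that by (intro Gamma_inf_transitive) (auto dest: bij_betwE)
next
  fix P
  assume "partition_on (Vspace n) P \<and> (\<forall>g\<in>Gamma_inf n \<rho>. \<forall>B\<in>P. g ` B \<in> P)"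
  then interpret feistel_invariant_partition n \<rho> P
    using assms by (intro feistel_invariant_partition_if_Gamma_inf_invariant) simp_all
  show "P = {Vspace n} \<or> P = {{x} | x. x \<in> Vspace n}"
    using trivial_or_preserves_congruence no_congruence by blast
qed

theorem mainTheorem3:
  fixes m \<delta> n :: nat and gs :: "nat \<Rightarrow> nat \<Rightarrow> nat" and L :: "nat \<Rightarrow> nat"
  assumes "m > 1" and "\<delta> > 1" and "n = m * \<delta>"
    and "\<forall>j<\<delta>. bij_betw (gs j) {..<2 ^ m} {..<2 ^ m}"
    and "\<forall>j<\<delta>. gs j 0 \<noteq> 0"
    and "inv_linear n L"
    and "non_type_preserving m \<delta> L"
  shows "primitive_on (Vspace n) (Gamma_inf n (L \<circ> parallel_sbox m \<delta> gs))"
proof -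
  have L: "bij_betw L {..<2 ^ n} {..<2 ^ n}"
    using assms(6) by (simp add: inv_linear_def)
  have "bij_betw (L \<circ> parallel_sbox m \<delta> gs) {..<2 ^ n} {..<2 ^ n}"
    using bij_betw_trans[OF parallel_sbox_bij[OF assms(4)]] L assms(3) by simp
  moreover have "\<not> preserves_congruence (2 ^ n) (2 ^ k) (L \<circ> parallel_sbox m \<delta> gs)"
    if "0 < k" and "k < n" for k
    using sbox_layer_not_preserves_congruence[OF assms(1,4)] L assms(3,7) that by simp
  moreover have "0 < n"
    using assms(1-3) by simp
  ultimately show ?thesis
    by (intro Gamma_inf_primitive)
qed

end
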